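(* Let $t_1,t_2:\Sigma^*\to\Omega^*$ be rational partial functions which are not adjacent. Then there are words $x,y,z\in\Sigma^*$ such that $xy^*z\subseteq\mathrm{dom}(t_1)\cap\mathrm{dom}(t_2)$ and $\|t_1(xy^kz),t_2(xy^kz)\|\in\Omega(k)$. In particular, there is a constant $c$ such that for each $k\in\mathbb N$ there exists a word $x\in\mathrm{dom}(t_1)\cap\mathrm{dom}(t_2)$ with $|x|\le c\,k$ (i.e. $|x|\in O(k)$) and $\|t_1(x),t_2(x)\|\ge k$.
   Context: For words $x,y$, $x\wedge y$ is their longest common suffix and $\|x,y\|=|x|+|y|-2|x\wedge y|$. Two partial functions $t_1,t_2$ are adjacent if $\sup\{\|t_1(w),t_2(w)\|:w\in\mathrm{dom}(t_1)\cap\mathrm{dom}(t_2)\}<\infty$, with the convention $\sup\emptyset=-\infty$. A partial function is rational if its graph is a rational subset of $\Sigma^*\times\Omega^*$. *)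

theory Defs
  imports Main "HOL-Library.Extended_Real" "HOL-Library.Landau_Symbols"
begin

fun lcp :: "'a list \<Rightarrow> 'a list \<Rightarrow> 'a list" where
  "lcp (a # xs) (b # ys) = (if a = b then a # lcp xs ys else [])"
| "lcp _ _ = []"

definition lcsuffix :: "'a list \<Rightarrow> 'a list \<Rightarrow> 'a list" where
  "lcsuffix x y = rev (lcp (rev x) (rev y))"

definition wdist :: "'a list \<Rightarrow> 'a list \<Rightarrow> nat" where
  "wdist x y = length x + length y - 2 * length (lcsuffix x y)"

text \<open>Adjacency, with sup of the empty set being -\<infinity> (as in ereal).\<close>
definition adjacent :: "('a list \<Rightarrow> 'b list option) \<Rightarrow> ('a list \<Rightarrow> 'b list option) \<Rightarrow> bool" where
  "adjacent t1 t2 \<longleftrightarrow>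
     (SUP w \<in> dom t1 \<inter> dom t2. ereal (real (wdist (the (t1 w)) (the (t2 w))))) < \<infinity>"

definition pconc :: "('a list \<times> 'b list) set \<Rightarrow> ('a list \<times> 'b list) set \<Rightarrow> ('a list \<times> 'b list) set" where
  "pconc A B = {(fst p @ fst q, snd p @ snd q) | p q. p \<in> A \<and> q \<in> B}"

inductive_set pstar :: "('a list \<times> 'b list) set \<Rightarrow> ('a list \<times> 'b list) set" for A where
  pstar_nil: "([], []) \<in> pstar A"
| pstar_step: "p \<in> A \<Longrightarrow> q \<in> pstar A \<Longrightarrow> (fst p @ fst q, snd p @ snd q) \<in> pstar A"

inductive_set rational_sets :: "('a list \<times> 'b list) set set" where
  rat_finite: "finite A \<Longrightarrow> A \<in> rational_sets"
| rat_union: "A \<in> rational_sets \<Longrightarrow> B \<in> rational_sets \<Longrightarrow> A \<union> B \<in> rational_sets"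
| rat_conc: "A \<in> rational_sets \<Longrightarrow> B \<in> rational_sets \<Longrightarrow> pconc A B \<in> rational_sets"
| rat_star: "A \<in> rational_sets \<Longrightarrow> pstar A \<in> rational_sets"

definition graph_of :: "('a list \<Rightarrow> 'b list option) \<Rightarrow> ('a list \<times> 'b list) set" where
  "graph_of t = {(w, v). t w = Some v}"

definition rational_fun :: "('a list \<Rightarrow> 'b list option) \<Rightarrow> bool" where
  "rational_fun t \<longleftrightarrow> graph_of t \<in> rational_sets"

definition wpow :: "'a list \<Rightarrow> nat \<Rightarrow> 'a list" where
  "wpow y k = concat (replicate k y)"

end

theory Submission
  imports Defs
begin

(*
  Rational relations are accepted by finite transducers (Kleene's construction). If a word w in
  the common domain of t1 and t2 is longer than the number of pairs of states of the two
  transducers, then after reading two different nonempty prefixes of w both runs are in the same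
  pair of states, so w = x y z with y nonempty and both runs can be pumped simultaneously:
  t1 (x y^k z) = p1 v1^k s1 and t2 (x y^k z) = p2 v2^k s2.

  For such outputs the distance is either constant in k or grows linearly. If |v1| and |v2|
  differ, the lengths drift apart. If they agree, compare the reversed outputs: either the fixed
  part of one extends that of the other by a word s with v1 s = s v2 (reversed), and then the
  distance does not depend on k, or their longest common prefix stays bounded while both lengths
  grow linearly.

  Hence, if no x, y, z yields linear growth, every long word can be shortened without changing
  the distance, so the distance is bounded by its maximum over the finitely many short words,
  i.e. t1 and t2 are adjacent. The words x y^(m k + K) z then witness the second claim.
*)

lemma affine_in_bigo_linear: "(\<lambda>k::nat. real (a + b * k)) \<in> O(\<lambda>k. real k)"
proof (rule bigoI[of _ "real (a + b)"])
  have "a + b * k \<le> (a + b) * k" if "k \<ge> 1" for k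
    using that by (simp add: algebra_simps)
  then show "\<forall>\<^sub>F k in at_top. norm (real (a + b * k)) \<le> real (a + b) * norm (real k)"
    unfolding eventually_at_top_linorder by (metis norm_of_nat of_nat_le_iff of_nat_mult)
qed

lemma bigomega_linearI:
  assumes "c > 0" and "\<And>k. k \<ge> N \<Longrightarrow> c * real k \<le> real (f k)"
  shows "(\<lambda>k. real (f k)) \<in> \<Omega>(\<lambda>k. real k)"
  using assms by (intro landau_omega.bigI[of c]) (auto simp: eventually_at_top_linorder)

lemma bigomega_linear_affine_index:
  fixes d :: "nat \<Rightarrow> nat"
  assumes "(\<lambda>k. real (d k)) \<in> \<Omega>(\<lambda>k. real k)"
  obtains m K where "\<And>k. k \<le> d (m * k + K)"
proof -
  obtain c where "c > 0" and "\<forall>\<^sub>F k in at_top. c * real k \<le> real (d k)"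
    using assms by (elim landau_omega.bigE) auto
  then obtain K where K: "\<And>k. k \<ge> K \<Longrightarrow> c * real k \<le> real (d k)"
    unfolding eventually_at_top_linorder by auto
  define m where "m = nat \<lceil>1 / c\<rceil>"
  have "1 / c \<le> real m"
    unfolding m_def by (rule real_nat_ceiling_ge)
  then have "1 \<le> c * real m"
    using \<open>c > 0\<close> by (simp add: field_simps)
  have "k \<le> d (m * k + K)" for k
  proof -
    have "real k \<le> c * real m * real k"
      using \<open>1 \<le> c * real m\<close> mult_right_mono[of 1 "c * real m" "real k"] by simp
    also have "\<dots> \<le> c * real (m * k + K)"
      using \<open>c > 0\<close> by (simp add: algebra_simps)
    also have "\<dots> \<le> real (d (m * k + K))" by (rule K) simp
    finally show ?thesis by simp
  qed
  then show thesis by (rule that)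
qed

lemma lcp_commute: "lcp xs ys = lcp ys xs"
  by (induction xs ys rule: lcp.induct) auto

lemma length_lcp_le_left: "length (lcp xs ys) \<le> length xs"
  by (induction xs ys rule: lcp.induct) auto

lemma length_lcp_le_right: "length (lcp xs ys) \<le> length ys"
  by (induction xs ys rule: lcp.induct) auto

lemma take_eq_if_le_length_lcp: "n \<le> length (lcp xs ys) \<Longrightarrow> take n xs = take n ys"
proof (induction xs ys arbitrary: n rule: lcp.induct)
  case (1 a xs b ys)
  then show ?case by (cases n) (auto split: if_splits)
qed auto

lemma lcp_append_same: "lcp (zs @ xs) (zs @ ys) = zs @ lcp xs ys"
  by (induction zs) auto

definition prefix_dist :: "'a list \<Rightarrow> 'a list \<Rightarrow> nat" where
  "prefix_dist x y = length x + length y - 2 * length (lcp x y)"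

lemma prefix_dist_commute: "prefix_dist x y = prefix_dist y x"
  by (simp add: prefix_dist_def lcp_commute)

lemma length_diff_le_prefix_dist: "length x - length y \<le> prefix_dist x y"
  using length_lcp_le_right[of x y] by (simp add: prefix_dist_def)

lemma wdist_conv_prefix_dist: "wdist x y = prefix_dist (rev x) (rev y)"
  by (simp add: wdist_def prefix_dist_def lcsuffix_def)

lemma wpow_0 [simp]: "wpow y 0 = []"
  by (simp add: wpow_def)

lemma wpow_Suc: "wpow y (Suc k) = y @ wpow y k"
  by (simp add: wpow_def)

lemma wpow_1 [simp]: "wpow y (Suc 0) = y"
  by (simp add: wpow_def)

lemma wpow_Suc_right: "wpow y (Suc k) = wpow y k @ y"
  by (simp add: wpow_def replicate_append_same[symmetric])

lemma length_wpow [simp]: "length (wpow y k) = k * length y"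
  by (induction k) (auto simp: wpow_Suc)

lemma wpow_Nil [simp]: "wpow [] k = []"
  by (simp add: wpow_def)

lemma rev_wpow: "rev (wpow y k) = wpow (rev y) k"
  by (induction k) (simp_all add: wpow_Suc wpow_Suc_right[symmetric])

lemma wpow_conjugate: "u @ s = s @ v \<Longrightarrow> wpow u k @ s = s @ wpow v k"
proof (induction k)
  case (Suc k)
  then show ?case by (metis append.assoc wpow_Suc)
qed simp

lemma length_lcp_pumped_less:
  assumes len_v: "length v1 = length v2" "v1 \<noteq> []" and len_w: "length w1 \<le> length w2"
    and not_conj: "\<nexists>s. w2 = w1 @ s \<and> v1 @ s = s @ v2"
    and k: "length w2 + 2 \<le> k"
  shows "length (lcp (w1 @ wpow v1 k @ u1) (w2 @ wpow v2 k @ u2)) < length w2 + length v1"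
proof (rule ccontr)
  \<comment> \<open>A common prefix reaching past w2 @ v2 forces w2 = w1 @ s with s @ v2 a prefix of
    a power of v1 whose first |s| letters are s again, i.e. v1 @ s = s @ v2.\<close>
  let ?p = "length v1"
  assume "\<not> ?thesis"
  then have common: "take n (w1 @ wpow v1 k @ u1) = take n (w2 @ wpow v2 k @ u2)"
    if "n \<le> length w2 + ?p" for n
    using that by (intro take_eq_if_le_length_lcp) simp
  from common[of "length w1"] len_w have "take (length w1) w2 = w1" by simp
  then obtain s where s: "w2 = w1 @ s" by (metis append_take_drop_id)
  obtain k' where k': "k = Suc k'" using k by (cases k) auto
  have "length s + ?p \<le> (length w2 + 1) * ?p" using s len_v(2) by (cases v1) auto
  also have "\<dots> \<le> k' * ?p" using k k' by (intro mult_le_mono1) simp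
  finally have len_s: "length s + ?p \<le> k' * ?p" .
  have prefix: "take (length s + ?p) (wpow v1 k) = s @ v2"
    using common[of "length w2 + ?p"] len_s len_v by (simp add: s k' wpow_Suc)
  have "take (length s) (take (length s + ?p) (wpow v1 k)) = s"
    unfolding prefix by simp
  then have "take (length s) (wpow v1 k) = s" by simp
  moreover have "take (length s) (wpow v1 k) = take (length s) (wpow v1 k')"
    using len_s by (simp add: k' wpow_Suc_right)
  moreover have "take (length s + ?p) (wpow v1 k) = v1 @ take (length s) (wpow v1 k')"
    by (simp add: k' wpow_Suc)
  ultimately have "v1 @ s = s @ v2"
    using prefix by simp
  then show False using not_conj s by blast
qed

lemma prefix_dist_pumped_conjugate:
  assumes "w2 = w1 @ s" and "v1 @ s = s @ v2"
  shows "prefix_dist (w1 @ wpow v1 k @ u1) (w2 @ wpow v2 k @ u2) = prefix_dist (w1 @ u1) (w2 @ u2)"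
proof -
  have "length v1 = length v2" using arg_cong[OF assms(2), of length] by simp
  have "w2 @ wpow v2 k @ u2 = (w1 @ wpow v1 k) @ s @ u2"
    using wpow_conjugate[OF assms(2), of k] assms(1) by simp
  then have "lcp (w1 @ wpow v1 k @ u1) (w2 @ wpow v2 k @ u2) = (w1 @ wpow v1 k) @ lcp u1 (s @ u2)"
    by (metis append.assoc lcp_append_same)
  moreover have "lcp (w1 @ u1) (w2 @ u2) = w1 @ lcp u1 (s @ u2)"
    using assms(1) by (simp add: lcp_append_same)
  ultimately show ?thesis
    using assms(1) \<open>length v1 = length v2\<close> length_lcp_le_left[of u1 "s @ u2"]
    by (simp add: prefix_dist_def)
qed

lemma pumped_prefix_dist_dichotomy_same_length:
  fixes w1 v1 u1 w2 v2 u2 :: "'a list"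
  defines "d \<equiv> \<lambda>k. prefix_dist (w1 @ wpow v1 k @ u1) (w2 @ wpow v2 k @ u2)"
  assumes len_v: "length v1 = length v2" and len_w: "length w1 \<le> length w2"
  shows "(\<forall>k. d k = d 0) \<or> (\<lambda>k. real (d k)) \<in> \<Omega>(\<lambda>k. real k)"
proof (cases "v1 = [] \<or> (\<exists>s. w2 = w1 @ s \<and> v1 @ s = s @ v2)")
  case True
  have "d k = d 0" for k
    using True
  proof
    assume "v1 = []"
    with len_v show ?thesis by (simp add: d_def)
  next
    assume "\<exists>s. w2 = w1 @ s \<and> v1 @ s = s @ v2"
    then obtain s where s: "w2 = w1 @ s" "v1 @ s = s @ v2" by blast
    show ?thesis by (simp add: d_def prefix_dist_pumped_conjugate[OF s])
  qed
  then show ?thesis by blast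
next
  case False
  have "k \<le> d k" if k: "length w2 + 2 * length v1 + 2 \<le> k" for k
  proof -
    have "length (lcp (w1 @ wpow v1 k @ u1) (w2 @ wpow v2 k @ u2)) < length w2 + length v1"
      using False k by (intro length_lcp_pumped_less len_v len_w) auto
    moreover have "k \<le> k * length v1" using False by (cases v1) auto
    moreover have "d k = length w1 + length u1 + length w2 + length u2 + 2 * (k * length v1)
        - 2 * length (lcp (w1 @ wpow v1 k @ u1) (w2 @ wpow v2 k @ u2))"
      using len_v by (simp add: d_def prefix_dist_def)
    ultimately show ?thesis using k by linarith
  qed
  then have "(\<lambda>k. real (d k)) \<in> \<Omega>(\<lambda>k. real k)"
    by (intro bigomega_linearI[of 1]) auto
  then show ?thesis ..
qed

lemma pumped_prefix_dist_linear_if_length_less: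
  assumes "length v2 < length v1"
  shows "(\<lambda>k. real (prefix_dist (w1 @ wpow v1 k @ u1) (w2 @ wpow v2 k @ u2))) \<in> \<Omega>(\<lambda>k. real k)"
proof (intro bigomega_linearI[of "1 / 2"])
  fix k assume k: "2 * (length w2 + length u2) \<le> k"
  have "k * length v2 + k \<le> k * length v1"
    using assms mult_le_mono2[of "Suc (length v2)" "length v1" k] by simp
  then have "k \<le> 2 * prefix_dist (w1 @ wpow v1 k @ u1) (w2 @ wpow v2 k @ u2)"
    using k length_diff_le_prefix_dist[of "w1 @ wpow v1 k @ u1" "w2 @ wpow v2 k @ u2"] by simp
  then show "1 / 2 * real k \<le> real (prefix_dist (w1 @ wpow v1 k @ u1) (w2 @ wpow v2 k @ u2))"
    by simp
qed simp

lemma pumped_prefix_dist_dichotomy: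
  fixes w1 v1 u1 w2 v2 u2 :: "'a list"
  defines "d \<equiv> \<lambda>k. prefix_dist (w1 @ wpow v1 k @ u1) (w2 @ wpow v2 k @ u2)"
  shows "(\<forall>k. d k = d 0) \<or> (\<lambda>k. real (d k)) \<in> \<Omega>(\<lambda>k. real k)"
proof -
  have d_swap: "d = (\<lambda>k. prefix_dist (w2 @ wpow v2 k @ u2) (w1 @ wpow v1 k @ u1))"
    by (simp add: d_def prefix_dist_commute)
  consider "length v1 = length v2" | "length v2 < length v1" | "length v1 < length v2"
    by linarith
  then show ?thesis
  proof cases
    case 1
    show ?thesis
    proof (cases "length w1 \<le> length w2")
      case True
      then show ?thesis
        using pumped_prefix_dist_dichotomy_same_length[OF 1] by (simp add: d_def)
    next
      case False
      then show ?thesis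
        using pumped_prefix_dist_dichotomy_same_length[of v2 v1 w2 w1 u2 u1] 1
        unfolding d_swap by simp
    qed
  next
    case 2
    show ?thesis unfolding d_def using pumped_prefix_dist_linear_if_length_less[OF 2] by blast
  next
    case 3
    show ?thesis unfolding d_swap using pumped_prefix_dist_linear_if_length_less[OF 3] by blast
  qed
qed

lemma pumped_wdist_dichotomy:
  fixes x1 y1 z1 x2 y2 z2 :: "'a list"
  defines "d \<equiv> \<lambda>k. wdist (x1 @ wpow y1 k @ z1) (x2 @ wpow y2 k @ z2)"
  shows "(\<forall>k. d k = d 0) \<or> (\<lambda>k. real (d k)) \<in> \<Omega>(\<lambda>k. real k)"
  using pumped_prefix_dist_dichotomy[of "rev z1" "rev y1" "rev x1" "rev z2" "rev y2" "rev x2"]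
  by (simp add: d_def wdist_conv_prefix_dist rev_wpow)

fun list_of_opt :: "'a option \<Rightarrow> 'a list" where
  "list_of_opt None = []"
| "list_of_opt (Some a) = [a]"

(* A transition (p, a, v, q) reads at most one letter (a = None is an epsilon move) and writes
   the word v. States are nat lists, so that disjoint copies of transducers for the closure
   constructions are obtained by prefixing a tag. *)
type_synonym ('s, 'o) transitions = "(nat list \<times> 's option \<times> 'o list \<times> nat list) set"

inductive path :: "('s, 'o) transitions \<Rightarrow> nat list \<Rightarrow> nat list \<Rightarrow> 's list \<Rightarrow> 'o list \<Rightarrow> bool"
  for D where
  path_Nil: "path D q q [] []"
| path_Cons: "(q, a, v, q') \<in> D \<Longrightarrow> path D q' r w u \<Longrightarrow> path D q r (list_of_opt a @ w) (v @ u)"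

definition accepted :: "('s, 'o) transitions \<Rightarrow> nat list set \<Rightarrow> nat list set \<Rightarrow> ('s list \<times> 'o list) set"
  where "accepted D I F = {(w, u). \<exists>i\<in>I. \<exists>f\<in>F. path D i f w u}"

definition recognizable :: "('s list \<times> 'o list) set \<Rightarrow> bool" where
  "recognizable A \<longleftrightarrow>
     (\<exists>D :: ('s, 'o) transitions. \<exists>I F. finite D \<and> finite I \<and> finite F \<and> A = accepted D I F)"

definition targets :: "('s, 'o) transitions \<Rightarrow> nat list set" where
  "targets D = (\<lambda>(p, a, v, q). q) ` D"

lemma finite_targets: "finite D \<Longrightarrow> finite (targets D)"
  by (simp add: targets_def)

lemma path_append:
  "path D q p w1 u1 \<Longrightarrow> path D p r w2 u2 \<Longrightarrow> path D q r (w1 @ w2) (u1 @ u2)"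
  by (induction rule: path.induct) (auto intro: path.intros)

lemma path_mono: "path D q r w u \<Longrightarrow> D \<subseteq> D' \<Longrightarrow> path D' q r w u"
  by (induction rule: path.induct) (auto intro: path.intros)

lemma path_single: "(q, a, v, r) \<in> D \<Longrightarrow> path D q r (list_of_opt a) v"
  using path_Cons[OF _ path_Nil] by fastforce

lemma path_wpow: "path D q q w u \<Longrightarrow> path D q q (wpow w k) (wpow u k)"
  by (induction k) (auto simp: wpow_Suc intro: path_Nil path_append)

lemma path_target: "path D q r w u \<Longrightarrow> r = q \<or> r \<in> targets D"
  by (induction rule: path.induct) (force simp: targets_def)+

lemma path_from_no_source:
  "path D q r w u \<Longrightarrow> q \<notin> fst ` D \<Longrightarrow> r = q \<and> w = [] \<and> u = []"
  by (induction rule: path.induct) force+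

lemma path_single_transitionD:
  assumes "path {(s, a, v, t)} s t w u" and "s \<noteq> t"
  shows "w = list_of_opt a \<and> u = v"
  using assms(1)
proof cases
  case (path_Cons a' v' q' w' u')
  then have "path {(s, a, v, t)} t t w' u'" by simp
  with assms(2) have "w' = [] \<and> u' = []" by (auto dest: path_from_no_source)
  with path_Cons show ?thesis by simp
qed (use assms(2) in simp)

definition tag :: "nat \<Rightarrow> ('s, 'o) transitions \<Rightarrow> ('s, 'o) transitions" where
  "tag b D = (\<lambda>(p, a, v, q). (b # p, a, v, b # q)) ` D"

lemma tag_memI: "(p, a, v, q) \<in> D \<Longrightarrow> (b # p, a, v, b # q) \<in> tag b D"
  unfolding tag_def by force

lemma tag_memE:
  assumes "(p', a, v, q') \<in> tag b D"
  obtains p q where "p' = b # p" "q' = b # q" "(p, a, v, q) \<in> D"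
  using assms unfolding tag_def by auto

lemma finite_tag: "finite D \<Longrightarrow> finite (tag b D)"
  unfolding tag_def by simp

lemma path_tag: "path D p q w u \<Longrightarrow> path (tag b D) (b # p) (b # q) w u"
  by (induction rule: path.induct) (auto intro: path.intros tag_memI)

lemma path_untag:
  assumes "path (tag b D \<union> R) (b # p) r w u" and "fst ` R \<inter> range (Cons b) = {}"
  obtains q where "r = b # q" and "path D p q w u"
proof -
  have "\<exists>q. r = b # q \<and> path D p q w u" if "path (tag b D \<union> R) p' r w u" "p' = b # p" for p' p
    using that
  proof (induction arbitrary: p rule: path.induct)
    case (path_Cons q a v q' r w u)
    with assms(2) have "(q, a, v, q') \<in> tag b D" by force
    then obtain p'' where "q' = b # p''" "(p, a, v, p'') \<in> D"
      using path_Cons.prems by (auto elim: tag_memE)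
    with path_Cons.IH show ?case by (auto intro: path.intros)
  qed (auto intro: path.intros)
  with assms(1) that show thesis by blast
qed

lemma recognizable_empty: "recognizable {}"
  unfolding recognizable_def accepted_def by (intro exI[of _ "{}"]) auto

lemma recognizable_atom: "recognizable {(list_of_opt a, v)}"
proof -
  let ?D = "{([], a, v, [0])}"
  have "accepted ?D {[]} {[0]} = {(list_of_opt a, v)}"
    unfolding accepted_def
    using path_single_transitionD[of "[]" a v "[0]"] path_single[of "[]" a v "[0]" ?D] by blast
  then show ?thesis
    unfolding recognizable_def by (intro exI[of _ ?D] exI[of _ "{[]}"] exI[of _ "{[0]}"]) simp
qed

lemma accepted_tag_union:
  assumes "fst ` R \<inter> range (Cons b) = {}" and "G \<inter> range (Cons b) = {}"
  shows "accepted (tag b D \<union> R) (Cons b ` I) (Cons b ` F \<union> G) = accepted D I F"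
proof (intro equalityI subsetI)
  fix x assume "x \<in> accepted (tag b D \<union> R) (Cons b ` I) (Cons b ` F \<union> G)"
  then obtain w u i f where x: "x = (w, u)" "i \<in> I" "f \<in> Cons b ` F \<union> G"
    and "path (tag b D \<union> R) (b # i) f w u"
    unfolding accepted_def by blast
  from path_untag[OF this(4) assms(1)] obtain q where "f = b # q" "path D i q w u" .
  with x assms(2) show "x \<in> accepted D I F" unfolding accepted_def by auto
next
  fix x assume "x \<in> accepted D I F"
  then obtain w u i f where "x = (w, u)" "i \<in> I" "f \<in> F" "path D i f w u"
    unfolding accepted_def by blast
  then show "x \<in> accepted (tag b D \<union> R) (Cons b ` I) (Cons b ` F \<union> G)"
    unfolding accepted_def using path_mono[OF path_tag[OF \<open>path D i f w u\<close>]] by blast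
qed

lemma recognizable_union:
  assumes "recognizable A" and "recognizable B"
  shows "recognizable (A \<union> B)"
proof -
  obtain D1 I1 F1 where 1: "finite D1" "finite I1" "finite F1" "A = accepted D1 I1 F1"
    using assms(1) unfolding recognizable_def by blast
  obtain D2 I2 F2 where 2: "finite D2" "finite I2" "finite F2" "B = accepted D2 I2 F2"
    using assms(2) unfolding recognizable_def by blast
  let ?D = "tag 0 D1 \<union> tag 1 D2" and ?I = "Cons 0 ` I1 \<union> Cons 1 ` I2"
    and ?F = "Cons 0 ` F1 \<union> Cons 1 ` F2"
  have "accepted ?D (Cons 0 ` I1) ?F = A"
    using 1 by (subst accepted_tag_union) (auto elim!: tag_memE)
  moreover have "accepted ?D (Cons 1 ` I2) ?F = B"
  proof -
    have "accepted (tag 1 D2 \<union> tag 0 D1) (Cons 1 ` I2) (Cons 1 ` F2 \<union> Cons 0 ` F1) = B"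
      using 2 by (subst accepted_tag_union) (auto elim!: tag_memE)
    then show ?thesis by (metis Un_commute)
  qed
  ultimately have "accepted ?D ?I ?F = A \<union> B"
    unfolding accepted_def by blast
  moreover have "finite ?D" "finite ?I" "finite ?F"
    using 1 2 by (simp_all add: finite_tag)
  ultimately show ?thesis
    unfolding recognizable_def by (intro exI[of _ ?D] exI[of _ ?I] exI[of _ ?F]) simp
qed

lemma pconcI: "(w1, u1) \<in> A \<Longrightarrow> (w2, u2) \<in> B \<Longrightarrow> (w1 @ w2, u1 @ u2) \<in> pconc A B"
  unfolding pconc_def by force

lemma pconcE:
  assumes "x \<in> pconc A B"
  obtains w1 u1 w2 u2 where "x = (w1 @ w2, u1 @ u2)" "(w1, u1) \<in> A" "(w2, u2) \<in> B"
  using assms unfolding pconc_def by force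

lemma pconc_mono: "A \<subseteq> A' \<Longrightarrow> B \<subseteq> B' \<Longrightarrow> pconc A B \<subseteq> pconc A' B'"
  unfolding pconc_def by blast

lemma accepted_mono: "I \<subseteq> I' \<Longrightarrow> F \<subseteq> F' \<Longrightarrow> accepted D I F \<subseteq> accepted D I' F'"
  unfolding accepted_def by blast

lemma accepted_Cons:
  "(q, a, v, q') \<in> D \<Longrightarrow> (w, u) \<in> accepted D {q'} F \<Longrightarrow> (list_of_opt a @ w, v @ u) \<in> accepted D {q} F"
  unfolding accepted_def by (auto intro: path_Cons)

lemma Nil_in_accepted: "q \<in> F \<Longrightarrow> ([], []) \<in> accepted D {q} F"
  unfolding accepted_def by (auto intro: path_Nil)

lemma pconc_accepted_Nil: "q \<in> F \<Longrightarrow> (w, u) \<in> B \<Longrightarrow> (w, u) \<in> pconc (accepted D {q} F) B"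
  using pconcI[OF Nil_in_accepted] by fastforce

lemma pconc_accepted_Cons:
  assumes "(q, a, v, q') \<in> D" and "(w, u) \<in> pconc (accepted D {q'} F) B"
  shows "(list_of_opt a @ w, v @ u) \<in> pconc (accepted D {q} F) B"
  using assms(2)
proof (rule pconcE)
  fix w1 u1 w2 u2
  assume "(w, u) = (w1 @ w2, u1 @ u2)" "(w1, u1) \<in> accepted D {q'} F" "(w2, u2) \<in> B"
  with pconcI[OF accepted_Cons[OF assms(1)]] show ?thesis by fastforce
qed

definition conc_transitions ::
  "('s, 'o) transitions \<Rightarrow> nat list set \<Rightarrow> nat list set \<Rightarrow> ('s, 'o) transitions \<Rightarrow> ('s, 'o) transitions"
  where "conc_transitions D1 F1 I2 D2 =
    tag 0 D1 \<union> tag 1 D2 \<union> (\<lambda>(f, i). (0 # f, None, [], 1 # i)) ` (F1 \<times> I2)"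

lemma path_conc_transitionsD:
  assumes "path (conc_transitions D1 F1 I2 D2) (0 # p) (1 # f) w u"
  shows "(w, u) \<in> pconc (accepted D1 {p} F1) (accepted D2 I2 {f})"
proof -
  let ?bridge = "(\<lambda>(f, i). (0 # f, None, [], 1 # i)) ` (F1 \<times> I2)"
  have split: "conc_transitions D1 F1 I2 D2 = tag 1 D2 \<union> (tag 0 D1 \<union> ?bridge)"
    unfolding conc_transitions_def by blast
  have sources: "fst ` (tag 0 D1 \<union> ?bridge) \<inter> range (Cons 1) = {}"
    by (auto elim!: tag_memE)
  have "(w, u) \<in> pconc (accepted D1 {p} F1) (accepted D2 I2 {f})"
    if "path (conc_transitions D1 F1 I2 D2) q r w u" "q = 0 # p" "r = 1 # f" for q r w u
    using that
  proof (induction arbitrary: p rule: path.induct)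
    case (path_Cons q a v q' r w u)
    show ?case
    proof (cases "(q, a, v, q') \<in> tag 0 D1")
      case True
      then obtain p' where "q' = 0 # p'" and step: "(p, a, v, p') \<in> D1"
        using path_Cons.prems by (auto elim: tag_memE)
      with path_Cons.IH path_Cons.prems show ?thesis
        by (blast intro: pconc_accepted_Cons[OF step])
    next
      case False
      with path_Cons.hyps(1) path_Cons.prems obtain i where
        i: "p \<in> F1" "i \<in> I2" "a = None" "v = []" "q' = 1 # i"
        unfolding conc_transitions_def by (auto elim: tag_memE)
      from path_Cons.hyps(2) have "path (tag 1 D2 \<union> (tag 0 D1 \<union> ?bridge)) (1 # i) r w u"
        unfolding split i(5) .
      then obtain f' where "r = 1 # f'" "path D2 i f' w u"
        by (rule path_untag[OF _ sources])
      with path_Cons.prems(2) i(2) have "(w, u) \<in> accepted D2 I2 {f}"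
        unfolding accepted_def by auto
      with i show ?thesis by (simp add: pconc_accepted_Nil)
    qed
  qed simp
  with assms show ?thesis by blast
qed

lemma accepted_conc_transitions:
  "accepted (conc_transitions D1 F1 I2 D2) (Cons 0 ` I1) (Cons 1 ` F2) =
   pconc (accepted D1 I1 F1) (accepted D2 I2 F2)"
  (is "accepted ?D _ _ = _")
proof (intro equalityI subsetI)
  fix x assume "x \<in> accepted ?D (Cons 0 ` I1) (Cons 1 ` F2)"
  then obtain w u i f where x: "x = (w, u)" "i \<in> I1" "f \<in> F2" and "path ?D (0 # i) (1 # f) w u"
    unfolding accepted_def by blast
  then have "x \<in> pconc (accepted D1 {i} F1) (accepted D2 I2 {f})"
    by (simp add: path_conc_transitionsD)
  moreover have "pconc (accepted D1 {i} F1) (accepted D2 I2 {f}) \<subseteq> pconc (accepted D1 I1 F1) (accepted D2 I2 F2)"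
    using x by (intro pconc_mono accepted_mono) auto
  ultimately show "x \<in> pconc (accepted D1 I1 F1) (accepted D2 I2 F2)" by blast
next
  fix x assume "x \<in> pconc (accepted D1 I1 F1) (accepted D2 I2 F2)"
  then obtain w1 u1 w2 u2 where x: "x = (w1 @ w2, u1 @ u2)"
    and "(w1, u1) \<in> accepted D1 I1 F1" "(w2, u2) \<in> accepted D2 I2 F2"
    by (rule pconcE)
  then obtain i1 f1 i2 f2 where 1: "i1 \<in> I1" "f1 \<in> F1" "path D1 i1 f1 w1 u1"
    and 2: "i2 \<in> I2" "f2 \<in> F2" "path D2 i2 f2 w2 u2"
    unfolding accepted_def by blast
  have sub: "tag 0 D1 \<subseteq> ?D" "tag 1 D2 \<subseteq> ?D" and bridge: "(0 # f1, None, [], 1 # i2) \<in> ?D"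
    unfolding conc_transitions_def using 1 2 by auto
  have "path ?D (0 # i1) (0 # f1) w1 u1"
    using path_mono[OF path_tag[OF 1(3)] sub(1)] .
  moreover have "path ?D (0 # f1) (1 # f2) w2 u2"
    using path_Cons[OF bridge path_mono[OF path_tag[OF 2(3)] sub(2)]] by simp
  ultimately have "path ?D (0 # i1) (1 # f2) (w1 @ w2) (u1 @ u2)"
    by (rule path_append)
  with 1 2 show "x \<in> accepted ?D (Cons 0 ` I1) (Cons 1 ` F2)"
    unfolding x accepted_def by blast
qed

lemma recognizable_pconc:
  assumes "recognizable A" and "recognizable B"
  shows "recognizable (pconc A B)"
proof -
  obtain D1 I1 F1 where 1: "finite D1" "finite I1" "finite F1" "A = accepted D1 I1 F1"
    using assms(1) unfolding recognizable_def by blast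
  obtain D2 I2 F2 where 2: "finite D2" "finite I2" "finite F2" "B = accepted D2 I2 F2"
    using assms(2) unfolding recognizable_def by blast
  have "finite (conc_transitions D1 F1 I2 D2)"
    using 1 2 unfolding conc_transitions_def by (simp add: finite_tag)
  with 1 2 show ?thesis
    unfolding recognizable_def
    using accepted_conc_transitions[of D1 F1 I2 D2 I1 F2, symmetric]
    by (intro exI[of _ "conc_transitions D1 F1 I2 D2"] exI[of _ "Cons 0 ` I1"] exI[of _ "Cons 1 ` F2"])
      simp
qed

lemma pstar_append: "(w1, u1) \<in> A \<Longrightarrow> (w2, u2) \<in> pstar A \<Longrightarrow> (w1 @ w2, u1 @ u2) \<in> pstar A"
  using pstar_step[of "(w1, u1)" A "(w2, u2)"] by simp

lemma pconc_pstar_subset: "pconc A (pstar A) \<subseteq> pstar A"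
  by (auto elim!: pconcE intro: pstar_append)

(* Used with the extra state [] as an initial and final state: it has no transitions and
   accounts for the empty pair. *)
definition star_transitions ::
  "('s, 'o) transitions \<Rightarrow> nat list set \<Rightarrow> nat list set \<Rightarrow> ('s, 'o) transitions"
  where "star_transitions D I F = tag 0 D \<union> (\<lambda>(f, i). (0 # f, None, [], 0 # i)) ` (F \<times> I)"

lemma star_transitions_tagged:
  "(q, a, v, q') \<in> star_transitions D I F \<Longrightarrow> \<exists>p p'. q = 0 # p \<and> q' = 0 # p'"
  unfolding star_transitions_def by (auto elim: tag_memE)

lemma path_star_transitionsD:
  assumes "path (star_transitions D I F) (0 # p) (0 # f) w u" and "f \<in> F"
  shows "(w, u) \<in> pconc (accepted D {p} F) (pstar (accepted D I F))"
proof -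
  have "(w, u) \<in> pconc (accepted D {p} F) (pstar (accepted D I F))"
    if "path (star_transitions D I F) q r w u" "q = 0 # p" "r = 0 # f" for q r w u
    using that
  proof (induction arbitrary: p rule: path.induct)
    case (path_Nil q)
    with assms(2) show ?case
      by (simp add: pconc_accepted_Nil pstar_nil)
  next
    case (path_Cons q a v q' r w u)
    show ?case
    proof (cases "(q, a, v, q') \<in> tag 0 D")
      case True
      then obtain p' where "q' = 0 # p'" and step: "(p, a, v, p') \<in> D"
        using path_Cons.prems by (auto elim: tag_memE)
      with path_Cons.IH path_Cons.prems show ?thesis
        by (blast intro: pconc_accepted_Cons[OF step])
    next
      case False
      with path_Cons.hyps(1) path_Cons.prems obtain i where
        i: "p \<in> F" "i \<in> I" "a = None" "v = []" "q' = 0 # i"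
        unfolding star_transitions_def by auto
      with path_Cons.IH path_Cons.prems
      have "(w, u) \<in> pconc (accepted D {i} F) (pstar (accepted D I F))" by blast
      also have "\<dots> \<subseteq> pconc (accepted D I F) (pstar (accepted D I F))"
        using i(2) by (intro pconc_mono accepted_mono) auto
      also have "\<dots> \<subseteq> pstar (accepted D I F)"
        by (rule pconc_pstar_subset)
      finally show ?thesis
        using i by (simp add: pconc_accepted_Nil)
    qed
  qed
  with assms show ?thesis by blast
qed

lemma accepted_star_transitions_subset:
  "accepted (star_transitions D I F) (insert [] (Cons 0 ` I)) (insert [] (Cons 0 ` F)) \<subseteq>
   pstar (accepted D I F)"
proof
  fix x assume "x \<in> accepted (star_transitions D I F) (insert [] (Cons 0 ` I)) (insert [] (Cons 0 ` F))"
  then obtain w u i r where x: "x = (w, u)" and i: "i \<in> insert [] (Cons 0 ` I)"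
    and r: "r \<in> insert [] (Cons 0 ` F)" and path: "path (star_transitions D I F) i r w u"
    unfolding accepted_def by blast
  show "x \<in> pstar (accepted D I F)"
  proof (cases "i = []")
    case True
    then have "w = [] \<and> u = []"
      using path_from_no_source[OF path] star_transitions_tagged by fastforce
    then show ?thesis using x by (simp add: pstar_nil)
  next
    case False
    with i obtain i' where i': "i = 0 # i'" "i' \<in> I" by blast
    have "r \<noteq> []"
      using path_target[OF path] i'(1) star_transitions_tagged by (fastforce simp: targets_def)
    with r obtain f where f: "r = 0 # f" "f \<in> F" by blast
    have "x \<in> pconc (accepted D {i'} F) (pstar (accepted D I F))"
      using path_star_transitionsD[OF path[unfolded i'(1) f(1)] f(2)] x by simp
    also have "\<dots> \<subseteq> pconc (accepted D I F) (pstar (accepted D I F))"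
      using i'(2) by (intro pconc_mono accepted_mono) auto
    also have "\<dots> \<subseteq> pstar (accepted D I F)"
      by (rule pconc_pstar_subset)
    finally show ?thesis .
  qed
qed

lemma pstar_subset_accepted_star_transitions:
  "pstar (accepted D I F) \<subseteq>
   accepted (star_transitions D I F) (insert [] (Cons 0 ` I)) (insert [] (Cons 0 ` F))"
proof
  let ?D = "star_transitions D I F"
  fix x assume "x \<in> pstar (accepted D I F)"
  then show "x \<in> accepted ?D (insert [] (Cons 0 ` I)) (insert [] (Cons 0 ` F))"
  proof (induction rule: pstar.induct)
    case pstar_nil
    then show ?case unfolding accepted_def by (auto intro: path_Nil)
  next
    case (pstar_step p q)
    obtain w1 u1 w2 u2 where pq: "p = (w1, u1)" "q = (w2, u2)" by (cases p, cases q)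
    with pstar_step.hyps obtain i1 f1 where 1: "i1 \<in> I" "f1 \<in> F" "path D i1 f1 w1 u1"
      unfolding accepted_def by blast
    have "tag 0 D \<subseteq> ?D" unfolding star_transitions_def by blast
    with 1 have first: "path ?D (0 # i1) (0 # f1) w1 u1"
      by (blast intro: path_mono path_tag)
    from pstar_step.IH pq obtain i r where
      i: "i \<in> insert [] (Cons 0 ` I)" "r \<in> insert [] (Cons 0 ` F)" "path ?D i r w2 u2"
      unfolding accepted_def by blast
    show ?case
    proof (cases "i = []")
      case True
      then have "w2 = [] \<and> u2 = []"
        using path_from_no_source[OF i(3)] star_transitions_tagged by fastforce
      with first 1 pq show ?thesis unfolding accepted_def by force
    next
      case False
      with i(1) obtain i' where "i = 0 # i'" "i' \<in> I" by blast
      with 1 have "(0 # f1, None, [], i) \<in> ?D" unfolding star_transitions_def by force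
      from path_append[OF first path_Cons[OF this i(3)]] 1 i(2) pq
      show ?thesis unfolding accepted_def by force
    qed
  qed
qed

lemma recognizable_pstar:
  assumes "recognizable A"
  shows "recognizable (pstar A)"
proof -
  obtain D I F where DIF: "finite D" "finite I" "finite F" "A = accepted D I F"
    using assms unfolding recognizable_def by blast
  then have "finite (star_transitions D I F)"
    unfolding star_transitions_def by (simp add: finite_tag)
  moreover have "pstar A = accepted (star_transitions D I F) (insert [] (Cons 0 ` I)) (insert [] (Cons 0 ` F))"
    using DIF accepted_star_transitions_subset pstar_subset_accepted_star_transitions by blast
  ultimately show ?thesis
    unfolding recognizable_def using DIF
    by (intro exI[of _ "star_transitions D I F"] exI[of _ "insert [] (Cons 0 ` I)"]
        exI[of _ "insert [] (Cons 0 ` F)"]) simp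
qed

lemma recognizable_singleton:
  fixes w :: "'s list" and v :: "'o list"
  shows "recognizable {(w, v)}"
proof -
  have "recognizable {(w, [] :: 'o list)}"
  proof (induction w)
    case Nil
    then show ?case using recognizable_atom[of None "[]"] by simp
  next
    case (Cons a w)
    have "pconc {([a], [] :: 'o list)} {(w, [])} = {(a # w, [])}" unfolding pconc_def by auto
    with recognizable_pconc[OF recognizable_atom[of "Some a" "[]"] Cons] show ?case by simp
  qed
  moreover have "pconc {([], v)} {(w, [])} = {(w, v)}" unfolding pconc_def by auto
  ultimately show ?thesis
    using recognizable_pconc[OF recognizable_atom[of None v]] by force
qed

lemma recognizable_finite: "finite A \<Longrightarrow> recognizable A"
proof (induction rule: finite_induct)
  case empty
  then show ?case by (rule recognizable_empty)
next
  case (insert x A)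
  then show ?case
    using recognizable_union[OF recognizable_singleton[of "fst x" "snd x"]] by simp
qed

lemma recognizable_if_rational: "A \<in> rational_sets \<Longrightarrow> recognizable A"
  by (induction rule: rational_sets.induct)
    (auto intro: recognizable_finite recognizable_union recognizable_pconc recognizable_pstar)

lemma rational_fun_transducer:
  assumes "rational_fun t"
  obtains D :: "('s, 'o) transitions" and I F
  where "finite D" and "\<And>w u. t w = Some u \<longleftrightarrow> (\<exists>i\<in>I. \<exists>f\<in>F. path D i f w u)"
proof -
  obtain D :: "('s, 'o) transitions" and I F where "finite D" "graph_of t = accepted D I F"
    using recognizable_if_rational assms unfolding rational_fun_def recognizable_def by blast
  then show thesis
    by (intro that[of D I F]) (auto simp: graph_of_def accepted_def set_eq_iff)
qed

(* ss lists the state reached right after each input letter is read. *)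
inductive traced_path ::
  "('s, 'o) transitions \<Rightarrow> nat list \<Rightarrow> nat list \<Rightarrow> 's list \<Rightarrow> 'o list \<Rightarrow> nat list list \<Rightarrow> bool"
  for D where
  traced_Nil: "traced_path D q q [] [] []"
| traced_Cons: "(q, a, v, q') \<in> D \<Longrightarrow> traced_path D q' r w u ss \<Longrightarrow>
    traced_path D q r (list_of_opt a @ w) (v @ u) (map (\<lambda>_. q') (list_of_opt a) @ ss)"

lemma path_imp_traced_path: "path D q r w u \<Longrightarrow> \<exists>ss. traced_path D q r w u ss"
  by (induction rule: path.induct) (auto intro: traced_path.intros)

lemma traced_path_imp_path: "traced_path D q r w u ss \<Longrightarrow> path D q r w u"
  by (induction rule: traced_path.induct) (auto intro: path.intros)

lemma length_traced_path: "traced_path D q r w u ss \<Longrightarrow> length ss = length w"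
  by (induction rule: traced_path.induct) auto

lemma set_traced_path: "traced_path D q r w u ss \<Longrightarrow> set ss \<subseteq> targets D"
  by (induction rule: traced_path.induct) (force simp: targets_def)+

lemma traced_path_split:
  assumes "traced_path D q r w u ss" and "j < length ss"
  shows "\<exists>w1 u1 w2 u2. traced_path D q (ss ! j) w1 u1 (take (Suc j) ss) \<and>
    traced_path D (ss ! j) r w2 u2 (drop (Suc j) ss) \<and> w = w1 @ w2 \<and> u = u1 @ u2"
  using assms
proof (induction arbitrary: j rule: traced_path.induct)
  case (traced_Cons q a v q' r w u ss)
  note step = traced_path.traced_Cons[OF traced_Cons.hyps(1)]
  show ?case
  proof (cases a)
    case None
    with traced_Cons.prems have "j < length ss" by simp
    then obtain w1 u1 w2 u2 where 1: "traced_path D q' (ss ! j) w1 u1 (take (Suc j) ss)"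
      and 2: "traced_path D (ss ! j) r w2 u2 (drop (Suc j) ss)" and "w = w1 @ w2" "u = u1 @ u2"
      using traced_Cons.IH by blast
    with step[OF 1] None show ?thesis
      by (intro exI[of _ w1] exI[of _ "v @ u1"] exI[of _ w2] exI[of _ u2]) simp
  next
    case (Some b)
    show ?thesis
    proof (cases j)
      case 0
      from step[OF traced_Nil] Some have "traced_path D q q' [b] v [q']" by simp
      with traced_Cons.hyps(2) Some 0 show ?thesis
        by (intro exI[of _ "[b]"] exI[of _ v] exI[of _ w] exI[of _ u]) simp
    next
      case (Suc j')
      with traced_Cons.prems Some have "j' < length ss" by simp
      then obtain w1 u1 w2 u2 where 1: "traced_path D q' (ss ! j') w1 u1 (take (Suc j') ss)"
        and 2: "traced_path D (ss ! j') r w2 u2 (drop (Suc j') ss)" and "w = w1 @ w2" "u = u1 @ u2"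
        using traced_Cons.IH by blast
      with step[OF 1] Some Suc show ?thesis
        by (intro exI[of _ "b # w1"] exI[of _ "v @ u1"] exI[of _ w2] exI[of _ u2]) simp
    qed
  qed
qed simp

lemma traced_path_loop:
  assumes P: "traced_path D q r w u ss" and j: "j1 < j2" "j2 < length ss" "ss ! j1 = ss ! j2"
  obtains u1 v u2 where "path D q (ss ! j1) (take (Suc j1) w) u1"
    and "path D (ss ! j1) (ss ! j1) (take (j2 - j1) (drop (Suc j1) w)) v"
    and "path D (ss ! j1) r (drop (Suc j2) w) u2"
proof -
  obtain w1 u1 w2 u2 where
    1: "traced_path D q (ss ! j1) w1 u1 (take (Suc j1) ss)"
    and 2: "traced_path D (ss ! j1) r w2 u2 (drop (Suc j1) ss)" and "w = w1 @ w2" "u = u1 @ u2"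
    using traced_path_split[OF P, of j1] j by auto
  moreover have "length w1 = Suc j1" using length_traced_path[OF 1] j by simp
  ultimately have w1: "w1 = take (Suc j1) w" "w2 = drop (Suc j1) w" by auto
  have "j2 - Suc j1 < length (drop (Suc j1) ss)" "drop (Suc j1) ss ! (j2 - Suc j1) = ss ! j1"
    using j by auto
  with traced_path_split[OF 2, of "j2 - Suc j1"] obtain w3 v w4 u4 where
    3: "traced_path D (ss ! j1) (ss ! j1) w3 v (take (j2 - j1) (drop (Suc j1) ss))"
    and 4: "traced_path D (ss ! j1) r w4 u4 (drop (j2 - j1) (drop (Suc j1) ss))"
    and "w2 = w3 @ w4" "u2 = v @ u4"
    using j by (auto simp: Suc_diff_Suc)
  moreover have "length w3 = j2 - j1" using length_traced_path[OF 3] j by simp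
  ultimately have "w3 = take (j2 - j1) (drop (Suc j1) w)" "w4 = drop (j2 - j1) (drop (Suc j1) w)"
    using w1 by auto
  moreover have "drop (j2 - j1) (drop (Suc j1) w) = drop (Suc j2) w"
    using j by simp
  ultimately show thesis
    using that traced_path_imp_path[OF 1] traced_path_imp_path[OF 3] traced_path_imp_path[OF 4] w1
    by simp
qed

lemma traced_paths_repeat_states:
  assumes "finite D1" "finite D2"
    and ss1: "traced_path D1 i1 f1 w u1 ss1" and ss2: "traced_path D2 i2 f2 w u2 ss2"
    and long: "card (targets D1 \<times> targets D2) < length w"
  obtains j1 j2 where "j1 < j2" "j2 < length w" "ss1 ! j1 = ss1 ! j2" "ss2 ! j1 = ss2 ! j2"
proof -
  have len: "length ss1 = length w" "length ss2 = length w"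
    using length_traced_path ss1 ss2 by blast+
  then have len_zip: "length (zip ss1 ss2) = length w" by simp
  have "set (zip ss1 ss2) \<subseteq> targets D1 \<times> targets D2"
    using set_traced_path[OF ss1] set_traced_path[OF ss2] by (auto dest: set_zip_leftD set_zip_rightD)
  then have "card (set (zip ss1 ss2)) \<le> card (targets D1 \<times> targets D2)"
    using assms(1,2) by (intro card_mono) (simp_all add: finite_targets)
  then have "\<not> distinct (zip ss1 ss2)"
    using long len_zip distinct_card by fastforce
  then obtain j1 j2 where "j1 < j2" "j2 < length w" "zip ss1 ss2 ! j1 = zip ss1 ss2 ! j2"
    unfolding distinct_conv_nth len_zip by (metis linorder_neqE_nat)
  with len show thesis using that by simp
qed

lemma synchronous_pumping:
  assumes "finite D1" "finite D2" and path1: "path D1 i1 f1 w u1" and path2: "path D2 i2 f2 w u2"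
    and long: "card (targets D1 \<times> targets D2) < length w"
  shows "\<exists>x y z p1 v1 s1 p2 v2 s2. w = x @ y @ z \<and> y \<noteq> [] \<and>
    (\<forall>k. path D1 i1 f1 (x @ wpow y k @ z) (p1 @ wpow v1 k @ s1) \<and>
         path D2 i2 f2 (x @ wpow y k @ z) (p2 @ wpow v2 k @ s2))"
proof -
  obtain ss1 ss2 where ss1: "traced_path D1 i1 f1 w u1 ss1" and ss2: "traced_path D2 i2 f2 w u2 ss2"
    using path_imp_traced_path[OF path1] path_imp_traced_path[OF path2] by blast
  obtain j1 j2 where j: "j1 < j2" "j2 < length w"
    and loop1: "ss1 ! j1 = ss1 ! j2" and loop2: "ss2 ! j1 = ss2 ! j2"
    by (rule traced_paths_repeat_states[OF assms(1,2) ss1 ss2 long])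
  have j2: "j2 < length ss1" "j2 < length ss2"
    using j length_traced_path[OF ss1] length_traced_path[OF ss2] by simp_all
  define x where "x = take (Suc j1) w"
  define y where "y = take (j2 - j1) (drop (Suc j1) w)"
  define z where "z = drop (Suc j2) w"
  obtain p1 v1 s1 where
    x1: "path D1 i1 (ss1 ! j1) x p1" and y1: "path D1 (ss1 ! j1) (ss1 ! j1) y v1"
    and z1: "path D1 (ss1 ! j1) f1 z s1"
    using traced_path_loop[OF ss1 j(1) j2(1) loop1] unfolding x_def y_def z_def by blast
  obtain p2 v2 s2 where
    x2: "path D2 i2 (ss2 ! j1) x p2" and y2: "path D2 (ss2 ! j1) (ss2 ! j1) y v2"
    and z2: "path D2 (ss2 ! j1) f2 z s2"
    using traced_path_loop[OF ss2 j(1) j2(2) loop2] unfolding x_def y_def z_def by blast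
  have "drop (Suc j1) w = y @ drop (j2 - j1) (drop (Suc j1) w)"
    unfolding y_def by (rule append_take_drop_id[symmetric])
  also have "drop (j2 - j1) (drop (Suc j1) w) = z"
    unfolding z_def using j by simp
  finally have "w = x @ y @ z"
    unfolding x_def by (metis append_take_drop_id)
  moreover have "y \<noteq> []" using j unfolding y_def by simp
  moreover have "\<forall>k. path D1 i1 f1 (x @ wpow y k @ z) (p1 @ wpow v1 k @ s1)"
    using path_append[OF x1 path_append[OF path_wpow[OF y1] z1]] by blast
  moreover have "\<forall>k. path D2 i2 f2 (x @ wpow y k @ z) (p2 @ wpow v2 k @ s2)"
    using path_append[OF x2 path_append[OF path_wpow[OF y2] z2]] by blast
  ultimately show ?thesis by blast
qed

lemma rational_funs_pumping:
  assumes "rational_fun t1" and "rational_fun t2"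
  obtains N where "\<And>w. w \<in> dom t1 \<inter> dom t2 \<Longrightarrow> N < length w \<Longrightarrow>
    \<exists>x y z p1 v1 s1 p2 v2 s2. w = x @ y @ z \<and> y \<noteq> [] \<and>
      (\<forall>k. t1 (x @ wpow y k @ z) = Some (p1 @ wpow v1 k @ s1) \<and>
           t2 (x @ wpow y k @ z) = Some (p2 @ wpow v2 k @ s2))"
proof -
  obtain D1 I1 F1 where "finite D1" and t1: "\<And>w u. t1 w = Some u \<longleftrightarrow> (\<exists>i\<in>I1. \<exists>f\<in>F1. path D1 i f w u)"
    using rational_fun_transducer[OF assms(1)] by metis
  obtain D2 I2 F2 where "finite D2" and t2: "\<And>w u. t2 w = Some u \<longleftrightarrow> (\<exists>i\<in>I2. \<exists>f\<in>F2. path D2 i f w u)"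
    using rational_fun_transducer[OF assms(2)] by metis
  show thesis
  proof (rule that[of "card (targets D1 \<times> targets D2)"])
    fix w assume "w \<in> dom t1 \<inter> dom t2" and long: "card (targets D1 \<times> targets D2) < length w"
    then obtain i1 f1 u1 i2 f2 u2 where 1: "i1 \<in> I1" "f1 \<in> F1" "path D1 i1 f1 w u1"
      and 2: "i2 \<in> I2" "f2 \<in> F2" "path D2 i2 f2 w u2"
      using t1 t2 by blast
    obtain x y z p1 v1 s1 p2 v2 s2 where "w = x @ y @ z" "y \<noteq> []"
      and paths: "\<And>k. path D1 i1 f1 (x @ wpow y k @ z) (p1 @ wpow v1 k @ s1) \<and>
        path D2 i2 f2 (x @ wpow y k @ z) (p2 @ wpow v2 k @ s2)"
      using synchronous_pumping[OF \<open>finite D1\<close> \<open>finite D2\<close> 1(3) 2(3) long] by blast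
    moreover have "t1 (x @ wpow y k @ z) = Some (p1 @ wpow v1 k @ s1)" for k
      using t1 1 paths by blast
    moreover have "t2 (x @ wpow y k @ z) = Some (p2 @ wpow v2 k @ s2)" for k
      using t2 2 paths by blast
    ultimately show "\<exists>x y z p1 v1 s1 p2 v2 s2. w = x @ y @ z \<and> y \<noteq> [] \<and>
      (\<forall>k. t1 (x @ wpow y k @ z) = Some (p1 @ wpow v1 k @ s1) \<and>
           t2 (x @ wpow y k @ z) = Some (p2 @ wpow v2 k @ s2))"
      by blast
  qed
qed

lemma bounded_if_shortenable:
  fixes g :: "('a::finite) list \<Rightarrow> nat"
  assumes "\<And>w. w \<in> S \<Longrightarrow> N < length w \<Longrightarrow> \<exists>w'\<in>S. length w' < length w \<and> g w' = g w"
  shows "\<exists>B. \<forall>w\<in>S. g w \<le> B"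
proof -
  let ?short = "{w \<in> S. length w \<le> N}"
  have "finite ?short"
    by (rule finite_subset[OF _ finite_lists_length_le[of UNIV N]]) auto
  have "g w \<le> Max (insert 0 (g ` ?short))" if "w \<in> S" for w
    using that
  proof (induction "length w" arbitrary: w rule: less_induct)
    case less
    show ?case
    proof (cases "length w \<le> N")
      case True
      with less.prems \<open>finite ?short\<close> show ?thesis by (intro Max_ge) auto
    next
      case False
      with assms less.prems obtain w' where "w' \<in> S" "length w' < length w" "g w' = g w"
        by (meson not_le)
      with less.hyps show ?thesis by metis
    qed
  qed
  then show ?thesis by blast
qed

lemma adjacent_if_bounded:
  assumes "\<And>w. w \<in> dom t1 \<inter> dom t2 \<Longrightarrow> wdist (the (t1 w)) (the (t2 w)) \<le> B"
  shows "adjacent t1 t2"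
proof -
  have "(SUP w \<in> dom t1 \<inter> dom t2. ereal (real (wdist (the (t1 w)) (the (t2 w))))) \<le> ereal (real B)"
    using assms by (intro SUP_least) simp
  then show ?thesis
    unfolding adjacent_def using order.strict_trans1 by fastforce
qed

lemma wdist_pump_down:
  assumes w: "w = x @ y @ z" and "y \<noteq> []"
    and t: "\<And>k. t1 (x @ wpow y k @ z) = Some (p1 @ wpow v1 k @ s1) \<and>
      t2 (x @ wpow y k @ z) = Some (p2 @ wpow v2 k @ s2)"
    and not_linear: "(\<lambda>k. real (wdist (the (t1 (x @ wpow y k @ z))) (the (t2 (x @ wpow y k @ z)))))
      \<notin> \<Omega>(\<lambda>k. real k)"
  shows "x @ z \<in> dom t1 \<inter> dom t2" and "length (x @ z) < length w"
    and "wdist (the (t1 (x @ z))) (the (t2 (x @ z))) = wdist (the (t1 w)) (the (t2 w))"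
proof -
  show "x @ z \<in> dom t1 \<inter> dom t2" using t[of 0] by auto
  show "length (x @ z) < length w" using w \<open>y \<noteq> []\<close> by simp
  have "(\<lambda>k. real (wdist (the (t1 (x @ wpow y k @ z))) (the (t2 (x @ wpow y k @ z))))) =
    (\<lambda>k. real (wdist (p1 @ wpow v1 k @ s1) (p2 @ wpow v2 k @ s2)))"
    using t by simp
  with not_linear have "(\<lambda>k. real (wdist (p1 @ wpow v1 k @ s1) (p2 @ wpow v2 k @ s2))) \<notin> \<Omega>(\<lambda>k. real k)"
    by simp
  then have "\<forall>k. wdist (p1 @ wpow v1 k @ s1) (p2 @ wpow v2 k @ s2) = wdist (p1 @ s1) (p2 @ s2)"
    using pumped_wdist_dichotomy[of p1 v1 s1 p2 v2 s2] by auto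
  then have "wdist (p1 @ v1 @ s1) (p2 @ v2 @ s2) = wdist (p1 @ s1) (p2 @ s2)"
    by (metis wpow_1)
  moreover have "t1 w = Some (p1 @ v1 @ s1)" "t2 w = Some (p2 @ v2 @ s2)"
    using t[of "Suc 0"] w by simp_all
  moreover have "t1 (x @ z) = Some (p1 @ s1)" "t2 (x @ z) = Some (p2 @ s2)"
    using t[of 0] by simp_all
  ultimately show "wdist (the (t1 (x @ z))) (the (t2 (x @ z))) = wdist (the (t1 w)) (the (t2 w))"
    by simp
qed

lemma not_adjacent_pumping:
  fixes t1 t2 :: "('s::finite) list \<Rightarrow> 'o list option"
  assumes "rational_fun t1" and "rational_fun t2" and "\<not> adjacent t1 t2"
  shows "\<exists>x y z. (\<forall>k. x @ wpow y k @ z \<in> dom t1 \<inter> dom t2) \<and>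
    (\<lambda>k. real (wdist (the (t1 (x @ wpow y k @ z))) (the (t2 (x @ wpow y k @ z))))) \<in> \<Omega>(\<lambda>k. real k)"
proof (rule ccontr)
  assume no_linear_loop: "\<not> ?thesis"
  define d where "d w = wdist (the (t1 w)) (the (t2 w))" for w
  obtain N where pump: "\<And>w. w \<in> dom t1 \<inter> dom t2 \<Longrightarrow> N < length w \<Longrightarrow>
    \<exists>x y z p1 v1 s1 p2 v2 s2. w = x @ y @ z \<and> y \<noteq> [] \<and>
      (\<forall>k. t1 (x @ wpow y k @ z) = Some (p1 @ wpow v1 k @ s1) \<and>
           t2 (x @ wpow y k @ z) = Some (p2 @ wpow v2 k @ s2))"
    using rational_funs_pumping[OF assms(1,2)] by blast
  have "\<exists>w'\<in>dom t1 \<inter> dom t2. length w' < length w \<and> d w' = d w"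
    if w_dom: "w \<in> dom t1 \<inter> dom t2" and long: "N < length w" for w
  proof -
    obtain x y z p1 v1 s1 p2 v2 s2 where w: "w = x @ y @ z" and "y \<noteq> []"
      and t: "\<And>k. t1 (x @ wpow y k @ z) = Some (p1 @ wpow v1 k @ s1) \<and>
        t2 (x @ wpow y k @ z) = Some (p2 @ wpow v2 k @ s2)"
      using pump[OF w_dom long] by blast
    from t have "\<forall>k. x @ wpow y k @ z \<in> dom t1 \<inter> dom t2" by blast
    with no_linear_loop
    have "(\<lambda>k. real (wdist (the (t1 (x @ wpow y k @ z))) (the (t2 (x @ wpow y k @ z)))))
      \<notin> \<Omega>(\<lambda>k. real k)"
      by blast
    note shorter = wdist_pump_down[OF w \<open>y \<noteq> []\<close> t this]
    show ?thesis
      unfolding d_def by (rule bexI[of _ "x @ z"]) (use shorter in simp_all)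
  qed
  then obtain B where "\<forall>w\<in>dom t1 \<inter> dom t2. d w \<le> B"
    using bounded_if_shortenable[of "dom t1 \<inter> dom t2" N d] by blast
  then have "adjacent t1 t2"
    by (intro adjacent_if_bounded[where B = B]) (simp add: d_def)
  with assms(3) show False ..
qed

theorem lemma21:
  fixes t1 t2 :: "('s::finite) list \<Rightarrow> ('o::finite) list option"
  assumes "rational_fun t1" and "rational_fun t2"
    and "\<not> adjacent t1 t2"
  shows "(\<exists>x y z. (\<forall>k. x @ wpow y k @ z \<in> dom t1 \<inter> dom t2) \<and>
            (\<lambda>k. real (wdist (the (t1 (x @ wpow y k @ z))) (the (t2 (x @ wpow y k @ z)))))
              \<in> \<Omega>(\<lambda>k. real k))
       \<and> (\<exists>f :: nat \<Rightarrow> 's list. (\<forall>k. f k \<in> dom t1 \<inter> dom t2 \<and>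
              wdist (the (t1 (f k))) (the (t2 (f k))) \<ge> k) \<and>
            (\<lambda>k. real (length (f k))) \<in> O(\<lambda>k. real k))"
proof -
  obtain x y z where dom: "\<forall>k. x @ wpow y k @ z \<in> dom t1 \<inter> dom t2"
    and linear: "(\<lambda>k. real (wdist (the (t1 (x @ wpow y k @ z))) (the (t2 (x @ wpow y k @ z)))))
      \<in> \<Omega>(\<lambda>k. real k)"
    using not_adjacent_pumping[OF assms] by blast
  obtain m K where linear_index:
    "\<And>k. k \<le> wdist (the (t1 (x @ wpow y (m * k + K) @ z))) (the (t2 (x @ wpow y (m * k + K) @ z)))"
    using bigomega_linear_affine_index[OF linear] by blast
  define f where "f k = x @ wpow y (m * k + K) @ z" for k
  have "\<forall>k. f k \<in> dom t1 \<inter> dom t2 \<and> k \<le> wdist (the (t1 (f k))) (the (t2 (f k)))"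
    using dom linear_index by (simp add: f_def)
  moreover have "length (f k) = (length x + length z + K * length y) + (m * length y) * k" for k
    by (simp add: f_def algebra_simps)
  then have "(\<lambda>k. real (length (f k))) \<in> O(\<lambda>k. real k)"
    by (simp only: affine_in_bigo_linear)
  ultimately show ?thesis
    using dom linear by blast
qed

end
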